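(* Let $P\subseteq\mathsf{Pos}(R)$, $\alpha\in\Sigma$, and let $T$ be the transition tree of $P$. Then: every $\odot$-live node is in $T$ and has its left child in $T$; every $\odot$-live node that $\odot$-dominates some node of $N^\odot(P,\alpha)$ is a branching node of $T$; and every node that weakly $\odot$-dominates a branching node of $T$ is itself a branching node of $T$.
   Context: A regular expression $R$ over $\Sigma$ is identified with its parse tree; $\odot$-nodes $v$ have children $\mathsf{left}(v),\mathsf{right}(v)$. Positions are the character-labeled leaves, $\mathsf{Pos}_\alpha$ those labeled $\alpha$. $\mathsf{first}(v)$, $\mathsf{last}(v)$ are the sets of positions occurring first/last in a sequence of positions generated by the subexpression rooted at $v$; $\mathsf{firstextent}(p)=\{v:p\in\mathsf{first}(v)\}$, $\mathsf{lastextent}(p)=\{v:p\in\mathsf{last}(v)\}$, extended to sets by union. $N^\odot(P,\alpha)$ is the set of $\odot$-nodes $v$ with $\mathsf{left}(v)\in\mathsf{lastextent}(P)$ and $\mathsf{right}(v)\in\mathsf{firstextent}(\mathsf{Pos}_\alpha)$. The transition tree $T$ of $P$ is the subtree induced by the nodes of $P$ and all their ancestors; a branching node of $T$ has two children in $T$. A node $v$ is $\odot$-live if $v$ is a $\odot$-node and $\mathsf{left}(v)\in\mathsf{lastextent}(P)$. A node $v$ is $\odot$-dominated by $u$ if $u$ is a proper ancestor of $v$ and $\mathsf{first}(\mathsf{right}(v))\subseteq\mathsf{first}(\mathsf{right}(u))$. A node $v$ of $T$ is weakly $\odot$-dominated by $u$ if $u$ is $\odot$-live, $u$ is a proper ancestor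 of $v$, and $\mathsf{first}(v)\subseteq\mathsf{first}(\mathsf{right}(u))$. *)

theory Defs
  imports Main "HOL-Library.Sublist"
begin

text \<open>Regular expressions over an alphabet 'a, identified with their parse trees.
  Nodes of the parse tree are addresses (paths from the root): child 0 is the
  left (or only) child, child 1 the right child.\<close>

datatype 'a rexp = Eps | Sym 'a | Alt "'a rexp" "'a rexp" | Conc "'a rexp" "'a rexp" | Star "'a rexp"

type_synonym node = "nat list"

fun subexp :: "'a rexp \<Rightarrow> node \<Rightarrow> 'a rexp option" where
  "subexp r [] = Some r"
| "subexp (Alt r s) (i # v) = (if i = 0 then subexp r v else if i = 1 then subexp s v else None)"
| "subexp (Conc r s) (i # v) = (if i = 0 then subexp r v else if i = 1 then subexp s v else None)"
| "subexp (Star r) (i # v) = (if i = 0 then subexp r v else None)"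
| "subexp _ (_ # _) = None"

definition nodes :: "'a rexp \<Rightarrow> node set" where
  "nodes R = {v. subexp R v \<noteq> None}"

definition is_conc :: "'a rexp \<Rightarrow> node \<Rightarrow> bool" where
  "is_conc R v \<longleftrightarrow> (\<exists>r s. subexp R v = Some (Conc r s))"

definition left :: "node \<Rightarrow> node" where "left v = v @ [0]"
definition right :: "node \<Rightarrow> node" where "right v = v @ [1]"

definition Pos :: "'a rexp \<Rightarrow> node set" where
  "Pos R = {v. \<exists>a. subexp R v = Some (Sym a)}"

definition PosSym :: "'a rexp \<Rightarrow> 'a \<Rightarrow> node set" where
  "PosSym R a = {v. subexp R v = Some (Sym a)}"

inductive_set starl :: "'b list set \<Rightarrow> 'b list set" for A :: "'b list set" where
  starl_Nil: "[] \<in> starl A"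
| starl_app: "x \<in> A \<Longrightarrow> y \<in> starl A \<Longrightarrow> x @ y \<in> starl A"

text \<open>Sequences of positions generated by a subexpression located at address p.\<close>
fun plang :: "'a rexp \<Rightarrow> node \<Rightarrow> node list set" where
  "plang Eps p = {[]}"
| "plang (Sym a) p = {[p]}"
| "plang (Alt r s) p = plang r (p @ [0]) \<union> plang s (p @ [1])"
| "plang (Conc r s) p = {x @ y | x y. x \<in> plang r (p @ [0]) \<and> y \<in> plang s (p @ [1])}"
| "plang (Star r) p = starl (plang r (p @ [0]))"

definition mlang :: "'a rexp \<Rightarrow> node \<Rightarrow> node list set" where
  "mlang R v = (case subexp R v of None \<Rightarrow> {} | Some r \<Rightarrow> plang r v)"

definition first :: "'a rexp \<Rightarrow> node \<Rightarrow> node set" where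
  "first R v = {hd w | w. w \<in> mlang R v \<and> w \<noteq> []}"

definition lastp :: "'a rexp \<Rightarrow> node \<Rightarrow> node set" where
  "lastp R v = {last w | w. w \<in> mlang R v \<and> w \<noteq> []}"

definition firstextent :: "'a rexp \<Rightarrow> node set \<Rightarrow> node set" where
  "firstextent R P = {v \<in> nodes R. \<exists>p\<in>P. p \<in> first R v}"

definition lastextent :: "'a rexp \<Rightarrow> node set \<Rightarrow> node set" where
  "lastextent R P = {v \<in> nodes R. \<exists>p\<in>P. p \<in> lastp R v}"

definition Nodot :: "'a rexp \<Rightarrow> node set \<Rightarrow> 'a \<Rightarrow> node set" where
  "Nodot R P a = {v. is_conc R v \<and> left v \<in> lastextent R P \<and> right v \<in> firstextent R (PosSym R a)}"

definition ttree :: "node set \<Rightarrow> node set" where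
  "ttree P = {u. \<exists>p\<in>P. prefix u p}"

definition branching :: "node set \<Rightarrow> node \<Rightarrow> bool" where
  "branching P v \<longleftrightarrow> v \<in> ttree P \<and> left v \<in> ttree P \<and> right v \<in> ttree P"

definition odot_live :: "'a rexp \<Rightarrow> node set \<Rightarrow> node \<Rightarrow> bool" where
  "odot_live R P v \<longleftrightarrow> is_conc R v \<and> left v \<in> lastextent R P"

definition odot_dom :: "'a rexp \<Rightarrow> node \<Rightarrow> node \<Rightarrow> bool" where
  "odot_dom R u v \<longleftrightarrow> strict_prefix u v \<and> first R (right v) \<subseteq> first R (right u)"

definition weak_odot_dom :: "'a rexp \<Rightarrow> node set \<Rightarrow> node \<Rightarrow> node \<Rightarrow> bool" where
  "weak_odot_dom R P u v \<longleftrightarrow> v \<in> ttree P \<and> odot_live R P u \<and> strict_prefix u v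
     \<and> first R v \<subseteq> first R (right u)"

end

theory Submission
  imports Defs
begin

text \<open>Every first or last position of a node lies below it in the parse tree, and every node of
  the transition tree has a position below it, so its first set is nonempty. A proper descendant
  \<open>v\<close> of a node \<open>u\<close> lies below either the left or the right child of \<open>u\<close>, and these two
  subtrees are disjoint. Hence if a position below \<open>v \<in> T\<close> is first for \<open>right u\<close>, then \<open>v\<close> lies
  below \<open>right u\<close>, which is therefore in \<open>T\<close>; together with the left child, which is in \<open>T\<close>
  for every \<open>\<odot>\<close>-live \<open>u\<close>, this makes \<open>u\<close> branching.\<close>

lemma starl_elem_from_factor:
  assumes "w \<in> starl A" "x \<in> set w" "\<And>u x. u \<in> A \<Longrightarrow> x \<in> set u \<Longrightarrow> Q x"
  shows "Q x"
  using assms by (induction rule: starl.induct) auto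

lemma plang_prefix: "w \<in> plang r p \<Longrightarrow> x \<in> set w \<Longrightarrow> prefix p x"
proof (induction r arbitrary: p w x)
  case (Alt r s) then show ?case by simp (metis append_prefixD)
next
  case (Conc r s) then show ?case by (auto; metis append_prefixD)
next
  case (Star r)
  have "w \<in> starl (plang r (p @ [0]))" using Star.prems by simp
  then show ?case
    by (rule starl_elem_from_factor[where Q = "prefix p"]) (use Star in \<open>auto intro: append_prefixD\<close>)
qed auto

lemma plang_nonempty: "\<exists>w. w \<in> plang r p"
  by (induction r arbitrary: p) (auto intro: starl_Nil)

lemma plang_covers_Sym:
  "subexp r q = Some (Sym a) \<Longrightarrow> \<exists>w\<in>plang r p. p @ q \<in> set w"
proof (induction r q arbitrary: p rule: subexp.induct)
  case (2 r s i v)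
  then show ?case by (force split: if_splits)
next
  case (3 r s i v)
  obtain x y where "x \<in> plang r (p @ [0])" "y \<in> plang s (p @ [1])"
    using plang_nonempty by blast
  with 3 show ?case by (fastforce split: if_splits)
next
  case (4 r i v)
  then obtain w where "w \<in> plang r (p @ [0])" "p @ [0] @ v \<in> set w"
    by (fastforce split: if_splits)
  moreover have "w @ [] \<in> starl (plang r (p @ [0]))"
    using calculation(1) by (intro starl_app starl_Nil)
  ultimately show ?case using 4 by (force split: if_splits)
qed auto

lemma subexp_append:
  "subexp R (v @ q) = (case subexp R v of None \<Rightarrow> None | Some r \<Rightarrow> subexp r q)"
  by (induction R v rule: subexp.induct) auto

lemma subexp_Cons_child: "subexp r (i # v) \<noteq> None \<Longrightarrow> i = 0 \<or> i = 1"
  by (cases r) (auto split: if_splits)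

lemma first_prefix: "x \<in> first R v \<Longrightarrow> prefix v x"
  unfolding first_def mlang_def by (auto split: option.splits intro: plang_prefix)

lemma lastp_prefix: "x \<in> lastp R v \<Longrightarrow> prefix v x"
  unfolding lastp_def mlang_def by (auto split: option.splits intro: plang_prefix)

lemma first_nonempty_above_Sym:
  assumes "subexp R (v @ q) = Some (Sym a)"
  shows "first R v \<noteq> {}"
proof -
  obtain r where r: "subexp R v = Some r" "subexp r q = Some (Sym a)"
    using assms subexp_append[of R v q] by (auto split: option.splits)
  obtain w where "w \<in> plang r v" "v @ q \<in> set w" using plang_covers_Sym[OF r(2)] by blast
  then have "hd w \<in> first R v" unfolding first_def mlang_def using r by auto
  then show ?thesis by blast
qed

lemma ttree_prefix_closed: "prefix u v \<Longrightarrow> v \<in> ttree P \<Longrightarrow> u \<in> ttree P"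
  unfolding ttree_def by (auto intro: prefix_order.trans)

lemma ttree_above_Sym:
  assumes "P \<subseteq> Pos R" "v \<in> ttree P"
  obtains q a where "subexp R (v @ q) = Some (Sym a)"
  using assms unfolding ttree_def Pos_def prefix_def by blast

lemma ttree_first_nonempty: "P \<subseteq> Pos R \<Longrightarrow> v \<in> ttree P \<Longrightarrow> first R v \<noteq> {}"
  by (metis ttree_above_Sym first_nonempty_above_Sym)

lemma strict_descendant_below_child:
  assumes "strict_prefix u v" "subexp R v \<noteq> None"
  shows "prefix (left u) v \<or> prefix (right u) v"
proof -
  obtain i rest where v: "v = u @ i # rest"
    using assms(1) by (metis append_Nil2 neq_Nil_conv prefix_def strict_prefix_def)
  then have "subexp R (u @ i # rest) \<noteq> None" using assms(2) by simp
  then have "i = 0 \<or> i = 1"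
    using subexp_append[of R u "i # rest"] subexp_Cons_child by (auto split: option.splits)
  then show ?thesis using v unfolding left_def right_def by auto
qed

lemma not_below_both_children: "\<not> (prefix (left u) x \<and> prefix (right u) x)"
proof
  assume "prefix (left u) x \<and> prefix (right u) x"
  then have "prefix (left u) (right u) \<or> prefix (right u) (left u)"
    using prefix_same_cases by blast
  then show False by (auto simp: left_def right_def)
qed

lemma right_child_in_ttree:
  assumes "P \<subseteq> Pos R" "strict_prefix u v" "v \<in> ttree P"
    and "x \<in> first R (right u)" "prefix v x"
  shows "right u \<in> ttree P"
proof -
  have "subexp R v \<noteq> None"
    using assms(1,3) by (metis ttree_above_Sym subexp_append option.simps(4) option.distinct(1))
  then have "prefix (left u) v \<or> prefix (right u) v"
    using assms(2) strict_descendant_below_child by blast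
  moreover have "\<not> prefix (left u) v"
    using assms(4,5) first_prefix not_below_both_children prefix_order.trans by blast
  ultimately show ?thesis using assms(3) ttree_prefix_closed by blast
qed

lemma odot_live_in_ttree:
  assumes "odot_live R P v"
  shows "v \<in> ttree P" "left v \<in> ttree P"
proof -
  obtain p where "p \<in> P" "p \<in> lastp R (left v)"
    using assms unfolding odot_live_def lastextent_def by blast
  then show "left v \<in> ttree P" unfolding ttree_def using lastp_prefix by blast
  then show "v \<in> ttree P" by (rule ttree_prefix_closed[rotated]) (simp add: left_def)
qed

lemma odot_dom_Nodot_branching:
  assumes "P \<subseteq> Pos R" "odot_live R P u" "v \<in> Nodot R P \<alpha>" "odot_dom R u v"
  shows "branching P u"
proof -
  have "odot_live R P v" using assms(3) unfolding Nodot_def odot_live_def by blast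
  then have v: "v \<in> ttree P" by (rule odot_live_in_ttree)
  obtain x where x: "x \<in> first R (right v)"
    using assms(3) unfolding Nodot_def firstextent_def by blast
  have "prefix v x" using first_prefix[OF x] by (auto simp: right_def intro: append_prefixD)
  moreover have "x \<in> first R (right u)" using x assms(4) unfolding odot_dom_def by blast
  ultimately have "right u \<in> ttree P"
    using right_child_in_ttree assms(1,4) v unfolding odot_dom_def by blast
  then show ?thesis using odot_live_in_ttree[OF assms(2)] unfolding branching_def by blast
qed

lemma weak_odot_dom_branching:
  assumes "P \<subseteq> Pos R" "weak_odot_dom R P u v"
  shows "branching P u"
proof -
  have v: "v \<in> ttree P" and u: "odot_live R P u"
    using assms(2) unfolding weak_odot_dom_def by blast+
  obtain x where x: "x \<in> first R v" using ttree_first_nonempty[OF assms(1) v] by blast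
  then have "right u \<in> ttree P"
    using right_child_in_ttree[OF assms(1) _ v] first_prefix assms(2)
    unfolding weak_odot_dom_def by blast
  then show ?thesis using odot_live_in_ttree[OF u] unfolding branching_def by blast
qed

theorem lemma6:
  fixes R :: "'a rexp" and P :: "node set" and \<alpha> :: 'a
  assumes "P \<subseteq> Pos R"
  shows "(\<forall>v. odot_live R P v \<longrightarrow> v \<in> ttree P \<and> left v \<in> ttree P)
       \<and> (\<forall>u v. odot_live R P u \<and> v \<in> Nodot R P \<alpha> \<and> odot_dom R u v \<longrightarrow> branching P u)
       \<and> (\<forall>u v. branching P v \<and> weak_odot_dom R P u v \<longrightarrow> branching P u)"
  using odot_live_in_ttree odot_dom_Nodot_branching[OF assms] weak_odot_dom_branching[OF assms]
  by blast

end
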